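(* For every integer $n\ge 1$, the sequence $(K_q(n,m))_{0\le m\le n}$ is strongly $q$-log-concave; that is, for all integers $1\le m\le l\le n-1$, the polynomial $K_q(n,m)K_q(n,l)-K_q(n,m-1)K_q(n,l+1)$ has nonnegative coefficients as a polynomial in $q$.
   Context: For integers $n\ge m\ge 0$ the Gaussian polynomial is ${n\brack m}=\prod_{i=0}^{m-1}\frac{1-q^{n-i}}{1-q^{m-i}}$. For $n\geq 1$ and $0\le m\le n$, the $q$-Kaplansky number is $K_q(n,m)=\frac{1-q^{n+m}}{1-q^{n}}{n\brack m}$ (a polynomial in $q$). A sequence of real polynomials $(f_k(q))$ is strongly $q$-log-concave if $f_a(q)f_b(q)-f_{a-1}(q)f_{b+1}(q)$ has nonnegative coefficients for all indices $b\ge a\ge 1$ (within the index range). *)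

theory Defs
  imports "HOL-Computational_Algebra.Polynomial"
begin

definition qvar :: "real poly" where "qvar = [:0, 1:]"

(* Gaussian polynomial [n choose m]_q = prod_{i<m} (1 - q^(n-i)) / (1 - q^(m-i)),
   computed as an exact polynomial quotient (the denominator divides the numerator) *)
definition gauss_poly :: "nat \<Rightarrow> nat \<Rightarrow> real poly" where
  "gauss_poly n m =
     (\<Prod>i<m. 1 - qvar ^ (n - i)) div (\<Prod>i<m. 1 - qvar ^ (m - i))"

definition kaplansky_poly :: "nat \<Rightarrow> nat \<Rightarrow> real poly" where
  "kaplansky_poly n m = ((1 - qvar ^ (n + m)) * gauss_poly n m) div (1 - qvar ^ n)"

definition nonneg_coeffs :: "real poly \<Rightarrow> bool" where
  "nonneg_coeffs p \<longleftrightarrow> (\<forall>k. coeff p k \<ge> 0)"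

end

theory Submission
  imports Defs
begin

(* Write [n,k] for the Gaussian polynomial. Since K_q(n,m) = [n,m] + q^n [n-1,m-1], the
   Kaplansky minor K(m) K(l) - K(m-1) K(l+1) splits into the Gaussian minor of level n,
   q^(2n) times the Gaussian minor of level n-1, and q^n times a mixed term; expanding the
   level-n factors of the mixed term by the q-Pascal rules turns it into a nonnegative
   combination of Gaussian minors as well.
   The Gaussian minors [n,i][n,j] - q^t [n,i-1][n,j+1], for i <= j and t <= 2, have
   nonnegative coefficients by induction on n: applying to each factor the q-Pascal rule
   appropriate for t expresses a minor of level n+1 as a nonnegative combination of minors
   of level n, again with t <= 2. *)

lemma nonneg_coeffs_add: "nonneg_coeffs p \<Longrightarrow> nonneg_coeffs q \<Longrightarrow> nonneg_coeffs (p + q)"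
  by (simp add: nonneg_coeffs_def)

lemma nonneg_coeffs_mult: "nonneg_coeffs p \<Longrightarrow> nonneg_coeffs q \<Longrightarrow> nonneg_coeffs (p * q)"
  unfolding nonneg_coeffs_def coeff_mult by (auto intro!: sum_nonneg)

lemma nonneg_coeffs_qvar_power: "nonneg_coeffs (qvar ^ k)"
proof -
  have "qvar ^ k = monom 1 k"
    by (simp add: qvar_def monom_altdef)
  then show ?thesis
    by (simp add: nonneg_coeffs_def)
qed

(* Integer lower index: [n,k] = 0 outside 0..n, and both q-Pascal rules hold for all k. *)
fun qbinom :: "nat \<Rightarrow> int \<Rightarrow> real poly" where
  "qbinom 0 k = (if k = 0 then 1 else 0)"
| "qbinom (Suc n) k = qbinom n (k - 1) + qvar ^ nat k * qbinom n k"

declare qbinom.simps(2) [simp del]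

lemma qbinom_eq_0: "k < 0 \<or> int n < k \<Longrightarrow> qbinom n k = 0"
  by (induction n arbitrary: k) (auto simp: qbinom.simps(2))

lemma qbinom_0_right [simp]: "qbinom n 0 = 1"
  by (induction n) (simp_all add: qbinom.simps(2) qbinom_eq_0)

lemma qbinom_diag [simp]: "qbinom n (int n) = 1"
  by (induction n) (simp_all add: qbinom.simps(2) qbinom_eq_0)

lemma nonneg_coeffs_qbinom: "nonneg_coeffs (qbinom n k)"
  by (induction n arbitrary: k)
    (simp_all add: qbinom.simps(2) nonneg_coeffs_def[of 1] nonneg_coeffs_def[of 0] coeff_1
      nonneg_coeffs_add nonneg_coeffs_mult nonneg_coeffs_qvar_power)

lemma qbinom_Suc_dual: "qbinom (Suc n) k = qvar ^ nat (int n + 1 - k) * qbinom n (k - 1) + qbinom n k"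
proof (induction n arbitrary: k)
  case 0
  then show ?case by (simp add: qbinom.simps(2))
next
  case (Suc n)
  consider "k \<le> 0" | "int n + 2 \<le> k" | "1 \<le> k" "k \<le> int n + 1" by linarith
  then show ?case
  proof cases
    case 1
    then show ?thesis by (cases "k = 0") (simp_all add: qbinom_eq_0)
  next
    case 2
    then show ?thesis
      using qbinom_diag[of "Suc (Suc n)"] qbinom_diag[of "Suc n"]
      by (cases "k = int n + 2") (simp_all add: qbinom_eq_0 add.commute)
  next
    case 3
    have "nat (int n + 2 - k) + nat (k - 1) = nat k + nat (int n + 1 - k)"
      using 3 by linarith
    then have exps: "qvar ^ nat (int n + 2 - k) * qvar ^ nat (k - 1)
        = qvar ^ nat k * qvar ^ nat (int n + 1 - k)"
      by (simp add: power_add[symmetric])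
    have "qbinom (Suc (Suc n)) k = qbinom (Suc n) (k - 1) + qvar ^ nat k * qbinom (Suc n) k"
      by (rule qbinom.simps(2))
    also have "\<dots> = qvar ^ nat (int n + 2 - k) * qbinom n (k - 2) + qbinom n (k - 1)
        + qvar ^ nat k * (qvar ^ nat (int n + 1 - k) * qbinom n (k - 1) + qbinom n k)"
      using Suc.IH[of k] Suc.IH[of "k - 1"] by (simp add: algebra_simps)
    also have "\<dots> = qvar ^ nat (int n + 2 - k)
          * (qbinom n (k - 2) + qvar ^ nat (k - 1) * qbinom n (k - 1))
        + (qbinom n (k - 1) + qvar ^ nat k * qbinom n k)"
      using exps by (simp add: algebra_simps)
    also have "\<dots> = qvar ^ nat (int (Suc n) + 1 - k) * qbinom (Suc n) (k - 1) + qbinom (Suc n) k"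
      by (simp add: qbinom.simps(2) algebra_simps)
    finally show ?thesis .
  qed
qed

definition qbinom_minor :: "nat \<Rightarrow> nat \<Rightarrow> int \<Rightarrow> int \<Rightarrow> real poly" where
  "qbinom_minor t n i j = qbinom n i * qbinom n j - qvar ^ t * (qbinom n (i - 1) * qbinom n (j + 1))"

lemma qbinom_minor_Suc_0:
  assumes "i \<le> int n + 1" and "0 \<le> j"
  shows "qbinom_minor 0 (Suc n) i j =
      qvar ^ nat (int n + 1 - i) * qbinom_minor 1 n (i - 1) (j - 1)
    + qvar ^ nat j * qbinom_minor 1 n i j
    + qvar ^ (nat (int n + 1 - i) + nat j) * qbinom_minor 2 n (i - 1) j
    + qbinom_minor 0 n i (j - 1)"
proof -
  define c where "c = nat (int n + 1 - i)"
  define b where "b = nat j"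
  have "nat (int n + 1 - (i - 1)) = Suc c" "nat (j + 1) = Suc b"
    using assms unfolding c_def b_def by linarith+
  then have "qbinom (Suc n) i = qvar ^ c * qbinom n (i - 1) + qbinom n i"
    "qbinom (Suc n) (i - 1) = qvar ^ Suc c * qbinom n (i - 2) + qbinom n (i - 1)"
    "qbinom (Suc n) j = qbinom n (j - 1) + qvar ^ b * qbinom n j"
    "qbinom (Suc n) (j + 1) = qbinom n j + qvar ^ Suc b * qbinom n (j + 1)"
    unfolding c_def b_def qbinom_Suc_dual[of n i] qbinom_Suc_dual[of n "i - 1"]
      qbinom.simps(2)[of n j] qbinom.simps(2)[of n "j + 1"]
    by simp_all
  then show ?thesis
    unfolding c_def[symmetric] b_def[symmetric]
    by (simp add: qbinom_minor_def power_add power2_eq_square algebra_simps)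
qed

lemma qbinom_minor_Suc_1:
  assumes "1 \<le> i" and "0 \<le> j"
  shows "qbinom_minor 1 (Suc n) i j =
      qbinom_minor 1 n (i - 1) (j - 1)
    + qvar ^ (nat i + nat j) * qbinom_minor 1 n i j
    + qvar ^ nat i * qbinom_minor 0 n i (j - 1)
    + qvar ^ nat j * qbinom_minor 2 n (i - 1) j"
proof -
  define a where "a = nat (i - 1)"
  define b where "b = nat j"
  have exps: "nat i = Suc a" "nat (j + 1) = Suc b"
    using assms unfolding a_def b_def by linarith+
  then have "qbinom (Suc n) i = qbinom n (i - 1) + qvar ^ Suc a * qbinom n i"
    "qbinom (Suc n) (i - 1) = qbinom n (i - 2) + qvar ^ a * qbinom n (i - 1)"
    "qbinom (Suc n) j = qbinom n (j - 1) + qvar ^ b * qbinom n j"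
    "qbinom (Suc n) (j + 1) = qbinom n j + qvar ^ Suc b * qbinom n (j + 1)"
    unfolding a_def b_def qbinom.simps(2)[of n i] qbinom.simps(2)[of n "i - 1"]
      qbinom.simps(2)[of n j] qbinom.simps(2)[of n "j + 1"]
    by simp_all
  with exps show ?thesis
    unfolding a_def[symmetric] b_def[symmetric]
    by (simp add: qbinom_minor_def power_add power2_eq_square algebra_simps)
qed

lemma qbinom_minor_Suc_2:
  assumes "1 \<le> i" and "j \<le> int n"
  shows "qbinom_minor 2 (Suc n) i j =
      qvar ^ nat (int n + 1 - j) * qbinom_minor 1 n (i - 1) (j - 1)
    + qvar ^ nat i * qbinom_minor 1 n i j
    + qbinom_minor 2 n (i - 1) j
    + qvar ^ (nat i + nat (int n + 1 - j)) * qbinom_minor 0 n i (j - 1)"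
proof -
  define a where "a = nat (i - 1)"
  define d where "d = nat (int n - j)"
  have exps: "nat i = Suc a" "nat (int n + 1 - j) = Suc d" "nat (int n + 1 - (j + 1)) = d"
    using assms unfolding a_def d_def by linarith+
  then have "qbinom (Suc n) i = qbinom n (i - 1) + qvar ^ Suc a * qbinom n i"
    "qbinom (Suc n) (i - 1) = qbinom n (i - 2) + qvar ^ a * qbinom n (i - 1)"
    "qbinom (Suc n) j = qvar ^ Suc d * qbinom n (j - 1) + qbinom n j"
    "qbinom (Suc n) (j + 1) = qvar ^ d * qbinom n j + qbinom n (j + 1)"
    unfolding a_def d_def qbinom.simps(2)[of n i] qbinom.simps(2)[of n "i - 1"]
      qbinom_Suc_dual[of n j] qbinom_Suc_dual[of n "j + 1"]
    by simp_all
  with exps show ?thesis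
    unfolding a_def[symmetric] d_def[symmetric]
    by (simp add: qbinom_minor_def power_add power2_eq_square algebra_simps)
qed

lemma qbinom_minor_0_pred [simp]: "qbinom_minor 0 n i (i - 1) = 0"
  by (simp add: qbinom_minor_def)

lemma nonneg_coeffs_qbinom_minor:
  assumes "i \<le> j" and "t \<le> 2"
  shows "nonneg_coeffs (qbinom_minor t n i j)"
  using assms
proof (induction n arbitrary: i j t)
  case 0
  then have "qbinom 0 (i - 1) * qbinom 0 (j + 1) = 0" by simp
  then show ?case
    unfolding qbinom_minor_def by (simp only: mult_zero_right diff_zero nonneg_coeffs_mult nonneg_coeffs_qbinom)
next
  case (Suc n)
  consider "i \<le> 0" | "int n < j" | "1 \<le> i" "j \<le> int n" by linarith
  then show ?case
  proof cases
    case 1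
    then show ?thesis by (simp add: qbinom_minor_def qbinom_eq_0 nonneg_coeffs_mult nonneg_coeffs_qbinom)
  next
    case 2
    then show ?thesis by (simp add: qbinom_minor_def qbinom_eq_0 nonneg_coeffs_mult nonneg_coeffs_qbinom)
  next
    case 3
    have IH: "nonneg_coeffs (qbinom_minor 1 n (i - 1) (j - 1))" "nonneg_coeffs (qbinom_minor 1 n i j)"
      "nonneg_coeffs (qbinom_minor 2 n (i - 1) j)"
      using Suc by simp_all
    have "nonneg_coeffs (qbinom_minor 0 n i (j - 1))"
      using Suc by (cases "i = j") (simp_all add: nonneg_coeffs_def)
    note nonneg = IH this nonneg_coeffs_qvar_power
    have "i \<le> int n + 1" "0 \<le> j" using 3 Suc.prems by linarith+
    then have "nonneg_coeffs (qbinom_minor 0 (Suc n) i j)"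
      "nonneg_coeffs (qbinom_minor 1 (Suc n) i j)"
      "nonneg_coeffs (qbinom_minor 2 (Suc n) i j)"
      unfolding qbinom_minor_Suc_0[OF \<open>i \<le> int n + 1\<close> \<open>0 \<le> j\<close>]
        qbinom_minor_Suc_1[OF \<open>1 \<le> i\<close> \<open>0 \<le> j\<close>] qbinom_minor_Suc_2[OF 3]
      by (intro nonneg_coeffs_add nonneg_coeffs_mult nonneg)+
    moreover have "t = 0 \<or> t = 1 \<or> t = 2" using Suc.prems by linarith
    ultimately show ?thesis by blast
  qed
qed

lemma nonneg_coeffs_qbinom_minor_0:
  assumes "i \<le> j + 1"
  shows "nonneg_coeffs (qbinom_minor 0 n i j)"
  using assms nonneg_coeffs_qbinom_minor[of i j 0 n]
  by (cases "j = i - 1") (simp_all add: nonneg_coeffs_def)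

fun qfact :: "nat \<Rightarrow> real poly" where
  "qfact 0 = 1"
| "qfact (Suc k) = qfact k * (1 - qvar ^ Suc k)"

lemma one_minus_qvar_power_nonzero: "0 < k \<Longrightarrow> 1 - qvar ^ k \<noteq> 0"
proof
  assume "0 < k" and "1 - qvar ^ k = 0"
  then have "poly (1 - qvar ^ k) 0 = 0" by simp
  with \<open>0 < k\<close> show False by (simp add: qvar_def power_0_left)
qed

lemma qfact_nonzero: "qfact k \<noteq> 0"
  by (induction k) (use one_minus_qvar_power_nonzero in \<open>simp_all del: power_Suc\<close>)

lemma qbinom_qfact: "m \<le> n \<Longrightarrow> qbinom n (int m) * qfact m * qfact (n - m) = qfact n"
proof (induction n arbitrary: m)
  case 0
  then show ?case by simp
next
  case (Suc n)
  show ?case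
  proof (cases m)
    case 0
    then show ?thesis by simp
  next
    case (Suc k)
    show ?thesis
    proof (cases "k = n")
      case True
      with Suc show ?thesis using qbinom_diag[of "Suc n"] by simp
    next
      case False
      with Suc \<open>m \<le> Suc n\<close> have "k < n" by simp
      then have nk: "n - k = Suc (n - Suc k)"
        and exps: "qvar ^ Suc k * qvar ^ (n - k) = qvar ^ Suc n"
        by (simp_all del: power_Suc add: power_add[symmetric])
      have pascal: "qbinom (Suc n) (int m) = qbinom n (int k) + qvar ^ Suc k * qbinom n (int (Suc k))"
        unfolding Suc qbinom.simps(2)[of n "int (Suc k)"] nat_int by simp
      have "qbinom (Suc n) (int m) * qfact m * qfact (Suc n - m)
          = (qbinom n k * qfact k * qfact (n - k)) * (1 - qvar ^ Suc k)
            + qvar ^ Suc k * (qbinom n (int (Suc k)) * qfact (Suc k) * qfact (n - Suc k))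
              * (1 - qvar ^ (n - k))"
        unfolding pascal using Suc by (simp del: power_Suc add: nk algebra_simps)
      also have "\<dots> = qfact n * (1 - qvar ^ Suc n)"
        using Suc.IH[of k] Suc.IH[of "Suc k"] \<open>k < n\<close>
        by (simp del: power_Suc add: algebra_simps exps[symmetric])
      finally show ?thesis by simp
    qed
  qed
qed

lemma prod_one_minus_qvar_power:
  "m \<le> n \<Longrightarrow> (\<Prod>i<m. 1 - qvar ^ (n - i)) * qfact (n - m) = qfact n"
proof (induction m)
  case 0
  then show ?case by simp
next
  case (Suc m)
  then have "n - m = Suc (n - Suc m)" by simp
  with Suc show ?case by (simp del: power_Suc add: algebra_simps)
qed

lemma gauss_poly_eq_qbinom: "m \<le> n \<Longrightarrow> gauss_poly n m = qbinom n (int m)"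
proof -
  assume "m \<le> n"
  have "(\<Prod>i<m. 1 - qvar ^ (n - i)) * qfact (n - m) = (qbinom n (int m) * qfact m) * qfact (n - m)"
    using prod_one_minus_qvar_power qbinom_qfact \<open>m \<le> n\<close> by simp
  then have "(\<Prod>i<m. 1 - qvar ^ (n - i)) = qbinom n (int m) * qfact m"
    using qfact_nonzero by simp
  moreover have "(\<Prod>i<m. 1 - qvar ^ (m - i)) = qfact m"
    using prod_one_minus_qvar_power[of m m] by simp
  ultimately show ?thesis
    unfolding gauss_poly_def using qfact_nonzero by simp
qed

lemma qbinom_absorption:
  assumes "m \<le> n"
  shows "(1 - qvar ^ Suc m) * qbinom (Suc n) (int (Suc m)) = (1 - qvar ^ Suc n) * qbinom n (int m)"
proof -
  have "((1 - qvar ^ Suc m) * qbinom (Suc n) (int (Suc m))) * (qfact m * qfact (n - m)) = qfact (Suc n)"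
    using qbinom_qfact[of "Suc m" "Suc n"] assms by (simp del: power_Suc add: algebra_simps)
  also have "\<dots> = ((1 - qvar ^ Suc n) * qbinom n (int m)) * (qfact m * qfact (n - m))"
    using qbinom_qfact[OF assms] by (simp del: power_Suc add: algebra_simps)
  finally show ?thesis
    using qfact_nonzero by simp
qed

lemma kaplansky_poly_eq_qbinom:
  assumes "1 \<le> n" and "m \<le> n"
  shows "kaplansky_poly n m = qbinom n (int m) + qvar ^ n * qbinom (n - 1) (int m - 1)"
proof -
  have absorb: "(1 - qvar ^ m) * qbinom n (int m) = (1 - qvar ^ n) * qbinom (n - 1) (int m - 1)"
  proof (cases m)
    case 0
    then show ?thesis by (simp add: qbinom_eq_0)
  next
    case (Suc k)
    with assms qbinom_absorption[of k "n - 1"] show ?thesis by (cases n) simp_all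
  qed
  have "(1 - qvar ^ (n + m)) * gauss_poly n m
      = qbinom n (int m) * (1 - qvar ^ n) + qvar ^ n * ((1 - qvar ^ m) * qbinom n (int m))"
    by (simp add: gauss_poly_eq_qbinom[OF assms(2)] algebra_simps power_add)
  also have "\<dots> = (qbinom n (int m) + qvar ^ n * qbinom (n - 1) (int m - 1)) * (1 - qvar ^ n)"
    unfolding absorb by (simp add: algebra_simps)
  finally show ?thesis
    unfolding kaplansky_poly_def using one_minus_qvar_power_nonzero assms(1) by simp
qed

lemma nonneg_coeffs_qbinom_mixed_minor:
  assumes "i \<le> j" and "i \<le> int n + 1" and "0 \<le> j"
  shows "nonneg_coeffs (qbinom (Suc n) i * qbinom n (j - 1) + qbinom n (i - 1) * qbinom (Suc n) j
    - qbinom (Suc n) (i - 1) * qbinom n j - qbinom n (i - 2) * qbinom (Suc n) (j + 1))"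
proof -
  define e where "e = nat (int n + 1 - i)"
  define b where "b = nat j"
  have "nat (int n + 1 - (i - 1)) = Suc e" "nat (j + 1) = Suc b"
    using assms unfolding e_def b_def by linarith+
  then have "qbinom (Suc n) i = qvar ^ e * qbinom n (i - 1) + qbinom n i"
    "qbinom (Suc n) (i - 1) = qvar ^ Suc e * qbinom n (i - 2) + qbinom n (i - 1)"
    "qbinom (Suc n) j = qbinom n (j - 1) + qvar ^ b * qbinom n j"
    "qbinom (Suc n) (j + 1) = qbinom n j + qvar ^ Suc b * qbinom n (j + 1)"
    unfolding e_def b_def qbinom_Suc_dual[of n i] qbinom_Suc_dual[of n "i - 1"]
      qbinom.simps(2)[of n j] qbinom.simps(2)[of n "j + 1"]
    by simp_all
  then have "qbinom (Suc n) i * qbinom n (j - 1) + qbinom n (i - 1) * qbinom (Suc n) j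
      - qbinom (Suc n) (i - 1) * qbinom n j - qbinom n (i - 2) * qbinom (Suc n) (j + 1)
    = qvar ^ e * qbinom_minor 1 n (i - 1) (j - 1) + qbinom_minor 0 n i (j - 1)
      + qbinom_minor 0 n (i - 1) (j - 1) + qvar ^ b * qbinom_minor 1 n (i - 1) j"
    by (simp add: qbinom_minor_def algebra_simps)
  also have "nonneg_coeffs \<dots>"
    using assms
    by (intro nonneg_coeffs_add nonneg_coeffs_mult nonneg_coeffs_qvar_power
        nonneg_coeffs_qbinom_minor nonneg_coeffs_qbinom_minor_0) simp_all
  finally show ?thesis .
qed

theorem corollary1p3:
  fixes n m l :: nat
  assumes "1 \<le> n" and "1 \<le> m" and "m \<le> l" and "l \<le> n - 1"
  shows "nonneg_coeffs (kaplansky_poly n m * kaplansky_poly n l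
                        - kaplansky_poly n (m - 1) * kaplansky_poly n (l + 1))"
proof -
  obtain n' where n: "n = Suc n'" using assms(1) by (cases n) auto
  have "kaplansky_poly n m * kaplansky_poly n l - kaplansky_poly n (m - 1) * kaplansky_poly n (l + 1)
    = qbinom_minor 0 n (int m) (int l) + qvar ^ n * qvar ^ n * qbinom_minor 0 n' (int m - 1) (int l - 1)
      + qvar ^ n * (qbinom n (int m) * qbinom n' (int l - 1) + qbinom n' (int m - 1) * qbinom n (int l)
        - qbinom n (int m - 1) * qbinom n' (int l) - qbinom n' (int m - 2) * qbinom n (int l + 1))"
    using assms by (simp add: kaplansky_poly_eq_qbinom n of_nat_diff qbinom_minor_def algebra_simps)
  also have "nonneg_coeffs \<dots>"
    using assms unfolding n
    by (intro nonneg_coeffs_add nonneg_coeffs_mult nonneg_coeffs_qvar_power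
        nonneg_coeffs_qbinom_minor nonneg_coeffs_qbinom_mixed_minor) simp_all
  finally show ?thesis .
qed

end
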